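(* Let $\rho>0$, let $f\colon\mathbb{R}^d\to\mathbb{R}$ be $\rho$-weakly convex, let $r\colon\mathbb{R}^d\to\mathbb{R}\cup\{+\infty\}$ be a proper closed convex function, and $\varphi=f+r$. Suppose: (A1) one can generate i.i.d. realizations $\xi_0,\xi_1,\ldots\sim P$ from a probability space $(\Omega,\mathcal{F},P)$; (A2) there is an open set $U\supseteq\mathrm{dom}\,r$ and a measurable map $G\colon U\times\Omega\to\mathbb{R}^d$ with $\mathbb{E}_\xi[G(x,\xi)]\in\partial f(x)$ for all $x\in U$; (A3) there is $L\ge0$ with $\mathbb{E}_\xi\|G(x,\xi)\|^2\le L^2$ for all $x\in\mathrm{dom}\,r$. Let $x_0\in\mathrm{dom}\,r$ and $x_{t+1}=\mathrm{prox}_{\alpha_t r}\big(x_t-\alpha_tG(x_t,\xi_t)\big)$ for $t\ge0$. Fix $\bar\rho\in(\rho,2\rho]$ and suppose $\alpha_t\in(0,1/\bar\rho]$ for all $t\ge0$. Let $\hat x_t=\operatorname{argmin}_y\{\varphi(y)+\frac{\bar\rho}{2}\|y-x_t\|^2\}$. Then for every $t\ge 0$, $$\mathbb{E}_t\|x_{t+1}-\hat x_t\|^2\le\|x_t-\hat x_t\|^2+4\alpha_t^2L^2-2\alpha_t(\bar\rho-\rho)\|x_t-\hat x_t\|^2.$$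
   Context: For $\varphi\colon\mathbb{R}^d\to\mathbb{R}\cup\{+\infty\}$ and $x$ with $\varphi(x)$ finite, the subdifferential $\partial\varphi(x)$ is the set of $v$ with $\varphi(y)\ge\varphi(x)+\langle v,y-x\rangle+o(\|y-x\|)$ as $y\to x$. A function $g$ is $\rho$-weakly convex if $g+\frac{\rho}{2}\|\cdot\|^2$ is convex. $\mathrm{prox}_{\alpha r}(x)=\operatorname{argmin}_y\{r(y)+\frac{1}{2\alpha}\|y-x\|^2\}$. $\mathbb{E}_t$ denotes expectation conditioned on $\xi_0,\ldots,\xi_{t-1}$. *)

theory Defs
  imports "HOL-Probability.Probability"
begin

definition frechet_subdiff :: "('a::real_inner \<Rightarrow> real) \<Rightarrow> 'a \<Rightarrow> 'a set" where
  "frechet_subdiff f x = {v. \<forall>e>0. eventually (\<lambda>y. f y \<ge> f x + inner v (y - x) - e * norm (y - x)) (at x)}"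

definition weakly_convex :: "real \<Rightarrow> ('a::real_normed_vector \<Rightarrow> real) \<Rightarrow> bool" where
  "weakly_convex \<rho> f \<longleftrightarrow> convex_on UNIV (\<lambda>x. f x + \<rho> / 2 * (norm x)\<^sup>2)"

text \<open>An extended-real valued function R^d \<rightarrow> R \<union> {+\<infinity>} is represented by its
  (effective) domain D and its finite values r on D; it is +\<infinity> outside D.\<close>
definition proper_closed_convex :: "'a::real_normed_vector set \<Rightarrow> ('a \<Rightarrow> real) \<Rightarrow> bool" where
  "proper_closed_convex D r \<longleftrightarrow> D \<noteq> {} \<and> convex D \<and> convex_on D r \<and>
     closed {(x, s::real). x \<in> D \<and> r x \<le> s}"

definition prox :: "'a::real_normed_vector set \<Rightarrow> ('a \<Rightarrow> real) \<Rightarrow> real \<Rightarrow> 'a \<Rightarrow> 'a" where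
  "prox D r \<alpha> x = (SOME y. y \<in> D \<and>
     (\<forall>z\<in>D. r y + 1 / (2 * \<alpha>) * (norm (y - x))\<^sup>2 \<le> r z + 1 / (2 * \<alpha>) * (norm (z - x))\<^sup>2))"

primrec sgd_iter :: "'a::real_normed_vector set \<Rightarrow> ('a \<Rightarrow> real) \<Rightarrow> ('a \<Rightarrow> 'b \<Rightarrow> 'a) \<Rightarrow>
    (nat \<Rightarrow> real) \<Rightarrow> 'a \<Rightarrow> (nat \<Rightarrow> 'b) \<Rightarrow> nat \<Rightarrow> 'a" where
  "sgd_iter D r G \<alpha> x0 \<xi> 0 = x0"
| "sgd_iter D r G \<alpha> x0 \<xi> (Suc t) =
     (let x = sgd_iter D r G \<alpha> x0 \<xi> t in prox D r (\<alpha> t) (x - \<alpha> t *\<^sub>R G x (\<xi> t)))"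

definition moreau_argmin :: "('a::real_normed_vector \<Rightarrow> real) \<Rightarrow> 'a set \<Rightarrow> ('a \<Rightarrow> real) \<Rightarrow> real \<Rightarrow> 'a \<Rightarrow> 'a" where
  "moreau_argmin f D r c x = (SOME y. y \<in> D \<and>
     (\<forall>z\<in>D. f y + r y + c / 2 * (norm (y - x))\<^sup>2 \<le> f z + r z + c / 2 * (norm (z - x))\<^sup>2))"

end

theory Submission
  imports Defs
begin

text \<open>
  Write \<open>x\<close> for the current iterate, \<open>xh\<close> for the proximal point of \<open>\<phi> = f + r\<close> at \<open>x\<close> with
  parameter \<open>\<rho>'\<close>, \<open>a\<close> for the step size and \<open>p = prox (x - a G)\<close> for the next iterate.
  Comparing \<open>xh\<close> with points on the segment towards \<open>p\<close>, linearizing \<open>f\<close> there by the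
  subgradients \<open>E G\<close> (of norm at most \<open>L\<close>) and passing to a convergent subsequence gives a
  weak subgradient \<open>w\<close> of \<open>f\<close> at \<open>xh\<close> with \<open>norm w \<le> L\<close> and
  \<open>\<langle>\<rho>' (x - xh) - w, p - xh\<rangle> \<le> r p - r xh\<close>: in the direction of \<open>p\<close>, \<open>xh\<close> is the proximal
  point of \<open>xh + a (\<rho>' (x - xh) - w)\<close>. Firm nonexpansiveness of the proximal map then yields
  \<open>norm (p - xh) \<le> norm ((1 - a \<rho>') (x - xh) - a (G - w))\<close>. In the expanded square the term
  linear in \<open>G - E G\<close> has mean zero, weak convexity bounds \<open>\<langle>xh - x, E G - w\<rangle>\<close> by
  \<open>\<rho> norm (xh - x)\<^sup>2\<close>, and \<open>E (norm (G - w))\<^sup>2 \<le> 4 L\<^sup>2\<close>; finally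
  \<open>(1 - a \<rho>')\<^sup>2 + 2 a \<rho> (1 - a \<rho>') \<le> 1 - 2 a (\<rho>' - \<rho>)\<close> because \<open>\<rho>' \<le> 2 \<rho>\<close>.
\<close>

lemma power2_norm_add: "(norm (a + b))\<^sup>2 = (norm a)\<^sup>2 + 2 * inner a b + (norm (b::'a::real_inner))\<^sup>2"
  by (simp add: dot_norm field_simps)

lemma power2_norm_diff: "(norm (a - b))\<^sup>2 = (norm a)\<^sup>2 - 2 * inner a b + (norm (b::'a::real_inner))\<^sup>2"
  using power2_norm_add[of a "- b"] by simp

section \<open>Minimizers of convex functions with closed epigraph\<close>

lemma closed_epigraph_add_continuous:
  fixes \<phi> k :: "'a::real_normed_vector \<Rightarrow> real"
  assumes "closed (epigraph D \<phi>)" and "continuous_on UNIV k"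
  shows "closed (epigraph D (\<lambda>y. \<phi> y + k y))"
proof -
  have "epigraph D (\<lambda>y. \<phi> y + k y) = (\<lambda>p. (fst p, snd p - k (fst p))) -` epigraph D \<phi>"
    by (auto simp: epigraph_def)
  moreover have "continuous_on UNIV (\<lambda>p::'a \<times> real. (fst p, snd p - k (fst p)))"
    by (intro continuous_intros continuous_on_compose2[OF assms(2)]) auto
  ultimately show ?thesis
    using assms(1) by (simp add: closed_vimage)
qed

lemma closed_sublevel_of_closed_epigraph:
  fixes \<phi> :: "'a::topological_space \<Rightarrow> real"
  assumes "closed (epigraph D \<phi>)"
  shows "closed {y \<in> D. \<phi> y \<le> c}"
proof -
  have "{y \<in> D. \<phi> y \<le> c} = (\<lambda>y. (y, c)) -` epigraph D \<phi>"
    by (auto simp: epigraph_def)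
  then show ?thesis
    using assms by (simp add: closed_vimage continuous_on_Pair)
qed

lemma closed_epigraph_attains_min:
  fixes F :: "'a::heine_borel \<Rightarrow> real"
  assumes epi: "closed (epigraph D F)" and y0: "y0 \<in> D"
    and bdd: "bounded {y \<in> D. F y \<le> F y0}"
  shows "\<exists>y\<in>D. \<forall>z\<in>D. F y \<le> F z"
proof -
  define S where "S = {y \<in> D. F y \<le> F y0}"
  define \<F> where "\<F> = (\<lambda>z. {y \<in> D. F y \<le> F z}) ` S"
  have "compact S"
    unfolding S_def using bdd closed_sublevel_of_closed_epigraph[OF epi]
    by (simp add: compact_eq_bounded_closed)
  moreover have "\<And>T. T \<in> \<F> \<Longrightarrow> closed T"
    unfolding \<F>_def using closed_sublevel_of_closed_epigraph[OF epi] by blast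
  \<comment> \<open>The sublevel sets are nested, so a finite subfamily contains its smallest member.\<close>
  moreover have "S \<inter> \<Inter>\<F>' \<noteq> {}" if fin: "finite \<F>'" and sub: "\<F>' \<subseteq> \<F>" for \<F>'
  proof -
    obtain Z where Z: "finite Z" "Z \<subseteq> S" "\<F>' = (\<lambda>z. {y \<in> D. F y \<le> F z}) ` Z"
      using finite_subset_image[OF fin sub[unfolded \<F>_def]] by blast
    show ?thesis
    proof (cases "Z = {}")
      case True
      then show ?thesis using y0 Z(3) by (auto simp: S_def)
    next
      case False
      obtain z where z: "z \<in> Z" "\<And>w. w \<in> Z \<Longrightarrow> F z \<le> F w"
        using ex_is_arg_min_if_finite[OF Z(1) False, of F] by (auto simp: is_arg_min_linorder)
      then have "z \<in> S \<inter> \<Inter>\<F>'"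
        using Z by (auto simp: S_def)
      then show ?thesis by blast
    qed
  qed
  ultimately have "S \<inter> \<Inter>\<F> \<noteq> {}"
    by (rule compact_imp_fip)
  then obtain y where y: "y \<in> S" "\<And>z. z \<in> S \<Longrightarrow> F y \<le> F z"
    unfolding \<F>_def by blast
  show ?thesis
  proof (intro bexI ballI)
    fix z assume "z \<in> D"
    then show "F y \<le> F z"
      using y by (cases "F z \<le> F y0") (auto simp: S_def)
  qed (use y in \<open>simp add: S_def\<close>)
qed

lemma convex_closed_epigraph_affine_minorant:
  fixes \<phi> :: "'a::euclidean_space \<Rightarrow> real"
  assumes "convex_on D \<phi>" and "closed (epigraph D \<phi>)"
  shows "\<exists>a c. \<forall>y\<in>D. inner a y + c \<le> \<phi> y"
proof (cases "D = {}")
  case False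
  then obtain y0 where y0: "y0 \<in> D" by blast
  have "(y0, \<phi> y0 - 1) \<notin> epigraph D \<phi>"
    by (simp add: epigraph_def)
  then obtain p c where sep: "inner p (y0, \<phi> y0 - 1) < c"
      and above: "\<And>q. q \<in> epigraph D \<phi> \<Longrightarrow> c < inner p q"
    using separating_hyperplane_closed_point[OF convex_epigraphI[OF assms(1)] assms(2)] by blast
  obtain a b where p: "p = (a, b)" by fastforce
  have "c < inner a y0 + b * \<phi> y0"
    using above[of "(y0, \<phi> y0)"] y0 by (simp add: epigraph_def p)
  with sep have b: "b > 0"
    by (simp add: p algebra_simps)
  have "inner (- a /\<^sub>R b) y + c / b \<le> \<phi> y" if "y \<in> D" for y
  proof -
    have "c < inner a y + b * \<phi> y"
      using above[of "(y, \<phi> y)"] that by (simp add: epigraph_def p)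
    then show ?thesis
      using b by (simp add: field_simps inner_commute)
  qed
  then show ?thesis by blast
qed simp

lemma convex_closed_epigraph_regularized_attains_min:
  fixes \<phi> :: "'a::euclidean_space \<Rightarrow> real"
  assumes cvx: "convex_on D \<phi>" and epi: "closed (epigraph D \<phi>)" and "D \<noteq> {}" and \<mu>: "\<mu> > 0"
  shows "\<exists>y\<in>D. \<forall>w\<in>D. \<phi> y + \<mu> / 2 * (norm (y - z))\<^sup>2 \<le> \<phi> w + \<mu> / 2 * (norm (w - z))\<^sup>2"
proof -
  obtain a c where aff: "\<And>y. y \<in> D \<Longrightarrow> inner a y + c \<le> \<phi> y"
    using convex_closed_epigraph_affine_minorant[OF cvx epi] by blast
  obtain y0 where y0: "y0 \<in> D" using \<open>D \<noteq> {}\<close> by blast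
  define F where "F y = \<phi> y + \<mu> / 2 * (norm (y - z))\<^sup>2" for y
  have "closed (epigraph D F)"
    unfolding F_def by (rule closed_epigraph_add_continuous[OF epi]) (intro continuous_intros)
  moreover have "bounded {y \<in> D. F y \<le> F y0}"
  proof -
    define K where "K = F y0 - c - inner a z"
    define R where "R = max 1 (2 * (\<bar>K\<bar> + norm a) / \<mu>)"
    have "norm (y - z) \<le> R" if y: "y \<in> D" "F y \<le> F y0" for y
    proof (rule ccontr)
      let ?t = "norm (y - z)"
      assume "\<not> ?t \<le> R"
      then have t: "1 < ?t" "2 * (\<bar>K\<bar> + norm a) / \<mu> < ?t"
        by (auto simp: R_def)
      have "- (norm a * ?t) \<le> inner a (y - z)"
        using norm_cauchy_schwarz[of "- a" "y - z"] by simp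
      then have "\<mu> / 2 * ?t\<^sup>2 \<le> K + norm a * ?t"
        using aff[OF y(1)] y(2) unfolding F_def K_def by (simp add: inner_diff_right)
      also have "\<dots> \<le> (\<bar>K\<bar> + norm a) * ?t"
        using t(1) by (simp add: distrib_right) (smt (verit) mult_le_cancel_left1)
      also have "\<dots> < \<mu> / 2 * ?t * ?t"
        using t \<mu> by (intro mult_strict_right_mono) (auto simp: field_simps)
      finally show False by (simp add: power2_eq_square)
    qed
    then have "{y \<in> D. F y \<le> F y0} \<subseteq> cball z R"
      by (auto simp: dist_norm norm_minus_commute)
    then show ?thesis
      using bounded_subset by blast
  qed
  ultimately show ?thesis
    using closed_epigraph_attains_min[OF _ y0] unfolding F_def by blast
qed

lemma regularized_min_variational_ineq:
  fixes \<phi> :: "'a::real_inner \<Rightarrow> real"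
  assumes cvx: "convex_on D \<phi>" and ys: "ys \<in> D"
    and min: "\<And>w. w \<in> D \<Longrightarrow> \<phi> ys + \<mu> / 2 * (norm (ys - z))\<^sup>2 \<le> \<phi> w + \<mu> / 2 * (norm (w - z))\<^sup>2"
    and y: "y \<in> D"
  shows "\<mu> * inner (z - ys) (y - ys) \<le> \<phi> y - \<phi> ys"
proof (rule tendsto_lowerbound)
  let ?K = "\<mu> / 2 * (norm (y - ys))\<^sup>2"
  show "((\<lambda>s. \<phi> y - \<phi> ys + s * ?K) \<longlongrightarrow> \<phi> y - \<phi> ys) (at_right 0)"
    by (intro tendsto_eq_intros) auto
  show "eventually (\<lambda>s. \<mu> * inner (z - ys) (y - ys) \<le> \<phi> y - \<phi> ys + s * ?K) (at_right 0)"
    unfolding eventually_at_right_field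
  proof (intro exI[of _ 1] conjI allI impI)
    fix s :: real assume "0 < s" "s < 1"
    then have s: "0 < s" "s \<le> 1" by auto
    define p where "p = ys + s *\<^sub>R (y - ys)"
    have p_eq: "p = (1 - s) *\<^sub>R ys + s *\<^sub>R y"
      by (simp add: p_def algebra_simps)
    have "p \<in> D"
      using cvx ys y s unfolding p_eq by (auto simp: convex_on_def convex_alt)
    then have "\<phi> ys + \<mu> / 2 * (norm (ys - z))\<^sup>2 \<le> (1 - s) * \<phi> ys + s * \<phi> y + \<mu> / 2 * (norm (p - z))\<^sup>2"
      using min convex_onD[OF cvx, of s ys y] s ys y unfolding p_eq by fastforce
    also have "(norm (p - z))\<^sup>2 = (norm (ys - z))\<^sup>2 - 2 * s * inner (z - ys) (y - ys) + s\<^sup>2 * (norm (y - ys))\<^sup>2"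
    proof -
      have pz: "p - z = s *\<^sub>R (y - ys) - (z - ys)"
        by (simp add: p_def algebra_simps)
      show ?thesis
        unfolding pz power2_norm_diff[of "s *\<^sub>R (y - ys)"]
        by (simp add: power_mult_distrib norm_minus_commute inner_commute)
    qed
    finally have "s * (\<mu> * inner (z - ys) (y - ys)) \<le> s * (\<phi> y - \<phi> ys + s * ?K)"
      by (simp add: algebra_simps power2_eq_square)
    then show "\<mu> * inner (z - ys) (y - ys) \<le> \<phi> y - \<phi> ys + s * ?K"
      using s by simp
  qed simp
qed simp

section \<open>Proximal points\<close>

lemma proper_closed_convex_closed_epigraph:
  "proper_closed_convex D r \<Longrightarrow> closed (epigraph D r)"
  unfolding proper_closed_convex_def epigraph_def by (simp add: case_prod_unfold)

lemma prox_minimizes: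
  fixes r :: "'a::euclidean_space \<Rightarrow> real"
  assumes r: "proper_closed_convex D r" and \<alpha>: "\<alpha> > 0"
  shows "prox D r \<alpha> z \<in> D"
    and "\<And>w. w \<in> D \<Longrightarrow> r (prox D r \<alpha> z) + 1 / (2 * \<alpha>) * (norm (prox D r \<alpha> z - z))\<^sup>2
                          \<le> r w + 1 / (2 * \<alpha>) * (norm (w - z))\<^sup>2"
proof -
  have "\<exists>y\<in>D. \<forall>w\<in>D. r y + 1 / \<alpha> / 2 * (norm (y - z))\<^sup>2 \<le> r w + 1 / \<alpha> / 2 * (norm (w - z))\<^sup>2"
    using r \<alpha> proper_closed_convex_closed_epigraph[OF r]
    by (intro convex_closed_epigraph_regularized_attains_min) (auto simp: proper_closed_convex_def)
  then have "\<exists>y\<in>D. \<forall>w\<in>D. r y + 1 / (2 * \<alpha>) * (norm (y - z))\<^sup>2 \<le> r w + 1 / (2 * \<alpha>) * (norm (w - z))\<^sup>2"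
    by (simp add: mult.commute[of \<alpha> 2])
  from someI_ex[OF this[unfolded Bex_def]] show "prox D r \<alpha> z \<in> D"
    and "\<And>w. w \<in> D \<Longrightarrow> r (prox D r \<alpha> z) + 1 / (2 * \<alpha>) * (norm (prox D r \<alpha> z - z))\<^sup>2
                          \<le> r w + 1 / (2 * \<alpha>) * (norm (w - z))\<^sup>2"
    unfolding prox_def by blast+
qed

lemma prox_variational_ineq:
  fixes r :: "'a::euclidean_space \<Rightarrow> real"
  assumes r: "proper_closed_convex D r" and \<alpha>: "\<alpha> > 0" and w: "w \<in> D"
  shows "inner (z - prox D r \<alpha> z) (w - prox D r \<alpha> z) \<le> \<alpha> * (r w - r (prox D r \<alpha> z))"
proof -
  have "1 / \<alpha> * inner (z - prox D r \<alpha> z) (w - prox D r \<alpha> z) \<le> r w - r (prox D r \<alpha> z)"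
    using r \<alpha> w prox_minimizes[OF r \<alpha>]
    by (intro regularized_min_variational_ineq[where D = D])
      (simp_all add: proper_closed_convex_def mult.commute[of \<alpha> 2])
  then show ?thesis
    using \<alpha> by (simp add: field_simps)
qed

lemma sgd_iter_in_domain:
  fixes r :: "'a::euclidean_space \<Rightarrow> real"
  assumes "proper_closed_convex D r" and "\<And>s. \<alpha> s > 0" and "x0 \<in> D"
  shows "sgd_iter D r G \<alpha> x0 \<xi> t \<in> D"
  using assms(3) by (induction t) (simp_all add: Let_def prox_minimizes(1)[OF assms(1) assms(2)])

lemma moreau_argmin_minimizes:
  fixes f r :: "'a::euclidean_space \<Rightarrow> real"
  assumes f: "weakly_convex \<rho> f" and r: "proper_closed_convex D r" and c: "\<rho> < c"
  shows "moreau_argmin f D r c x \<in> D"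
    and "\<And>w. w \<in> D \<Longrightarrow> f (moreau_argmin f D r c x) + r (moreau_argmin f D r c x)
              + c / 2 * (norm (moreau_argmin f D r c x - x))\<^sup>2 \<le> f w + r w + c / 2 * (norm (w - x))\<^sup>2"
proof -
  define h where "h w = f w + \<rho> / 2 * (norm w)\<^sup>2 + (- c) * inner x w" for w
  have shift: "f w + r w + c / 2 * (norm (w - x))\<^sup>2 = (r w + h w) + (c - \<rho>) / 2 * (norm (w - 0))\<^sup>2 + c / 2 * (norm x)\<^sup>2" for w
    unfolding h_def power2_norm_diff by (simp add: inner_commute algebra_simps add_divide_distrib diff_divide_distrib)
  have h_cvx: "convex_on UNIV h"
  proof -
    have "convex_on UNIV (\<lambda>w. (- c) * inner x w)"
      by (rule convex_onI) (simp_all add: inner_simps algebra_simps)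
    then show ?thesis
      using f unfolding weakly_convex_def h_def by (rule convex_on_add[rotated])
  qed
  have "convex_on D (\<lambda>w. r w + h w)"
    using r convex_on_subset[OF h_cvx, of D] by (intro convex_on_add) (auto simp: proper_closed_convex_def)
  moreover have "closed (epigraph D (\<lambda>w. r w + h w))"
    using proper_closed_convex_closed_epigraph[OF r] convex_on_continuous[OF open_UNIV h_cvx]
    by (rule closed_epigraph_add_continuous)
  ultimately have "\<exists>y\<in>D. \<forall>w\<in>D. r y + h y + (c - \<rho>) / 2 * (norm (y - 0))\<^sup>2 \<le> r w + h w + (c - \<rho>) / 2 * (norm (w - 0))\<^sup>2"
    using r c by (intro convex_closed_epigraph_regularized_attains_min) (auto simp: proper_closed_convex_def)
  then have "\<exists>y\<in>D. \<forall>w\<in>D. f y + r y + c / 2 * (norm (y - x))\<^sup>2 \<le> f w + r w + c / 2 * (norm (w - x))\<^sup>2"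
    unfolding shift by (simp add: add.assoc)
  from someI_ex[OF this[unfolded Bex_def]] show "moreau_argmin f D r c x \<in> D"
    and "\<And>w. w \<in> D \<Longrightarrow> f (moreau_argmin f D r c x) + r (moreau_argmin f D r c x)
              + c / 2 * (norm (moreau_argmin f D r c x - x))\<^sup>2 \<le> f w + r w + c / 2 * (norm (w - x))\<^sup>2"
    unfolding moreau_argmin_def by blast+
qed

section \<open>Weak subgradients\<close>

definition weak_subgradient :: "real \<Rightarrow> ('a::real_inner \<Rightarrow> real) \<Rightarrow> 'a \<Rightarrow> 'a \<Rightarrow> bool" where
  "weak_subgradient \<rho> f y u \<longleftrightarrow> (\<forall>z. f y + inner u (z - y) - \<rho> / 2 * (norm (z - y))\<^sup>2 \<le> f z)"

lemma weakly_convex_segment_le: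
  fixes f :: "'a::real_inner \<Rightarrow> real"
  assumes "weakly_convex \<rho> f" and t: "0 \<le> t" "t \<le> 1"
  shows "f (y + t *\<^sub>R (z - y)) \<le> (1 - t) * f y + t * f z + \<rho> / 2 * (t * (1 - t)) * (norm (z - y))\<^sup>2"
proof -
  define u where "u = y + t *\<^sub>R (z - y)"
  have "f u + \<rho> / 2 * (norm u)\<^sup>2 \<le> (1 - t) * (f y + \<rho> / 2 * (norm y)\<^sup>2) + t * (f z + \<rho> / 2 * (norm z)\<^sup>2)"
  proof -
    have "u = (1 - t) *\<^sub>R y + t *\<^sub>R z"
      by (simp add: u_def algebra_simps)
    then show ?thesis
      using convex_onD[OF assms(1)[unfolded weakly_convex_def] t, of y z] by simp
  qed
  moreover have "(norm u)\<^sup>2 = (1 - t) * (norm y)\<^sup>2 + t * (norm z)\<^sup>2 - t * (1 - t) * (norm (z - y))\<^sup>2"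
    unfolding u_def power2_norm_eq_inner by (simp add: inner_simps algebra_simps power2_eq_square)
  ultimately show ?thesis
    unfolding u_def[symmetric] by (simp add: field_simps)
qed

lemma weakly_convex_continuous:
  fixes f :: "'a::euclidean_space \<Rightarrow> real"
  assumes "weakly_convex \<rho> f"
  shows "continuous_on UNIV f"
proof -
  have "continuous_on UNIV (\<lambda>x. f x + \<rho> / 2 * (norm x)\<^sup>2)"
    using convex_on_continuous[OF open_UNIV] assms unfolding weakly_convex_def by blast
  then have "continuous_on UNIV (\<lambda>x. (f x + \<rho> / 2 * (norm x)\<^sup>2) - \<rho> / 2 * (norm x)\<^sup>2)"
    by (rule continuous_on_diff) (intro continuous_intros)
  then show ?thesis by simp
qed

lemma frechet_subdiff_along_segment:
  fixes f :: "'a::real_inner \<Rightarrow> real"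
  assumes v: "v \<in> frechet_subdiff f y" and e: "e > 0" and "z \<noteq> y"
  shows "\<exists>t. 0 < t \<and> t < 1 \<and> f y + t * inner v (z - y) - e * (t * norm (z - y)) \<le> f (y + t *\<^sub>R (z - y))"
proof -
  have "filterlim (\<lambda>t. y + t *\<^sub>R (z - y)) (at y) (at_right (0::real))"
  proof (rule filterlim_atI)
    show "((\<lambda>t. y + t *\<^sub>R (z - y)) \<longlongrightarrow> y) (at_right 0)"
      by (intro tendsto_eq_intros) auto
    show "eventually (\<lambda>t. y + t *\<^sub>R (z - y) \<noteq> y) (at_right 0)"
      using eventually_at_right_less[of "0::real"] by (rule eventually_mono) (use \<open>z \<noteq> y\<close> in auto)
  qed
  moreover have "eventually (\<lambda>u. f y + inner v (u - y) - e * norm (u - y) \<le> f u) (at y)"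
    using v e unfolding frechet_subdiff_def by blast
  ultimately have "eventually (\<lambda>t. f y + inner v (t *\<^sub>R (z - y)) - e * norm (t *\<^sub>R (z - y))
                               \<le> f (y + t *\<^sub>R (z - y))) (at_right 0)"
    by (auto dest: eventually_compose_filterlim)
  moreover have "eventually (\<lambda>t::real. 0 < t \<and> t < 1) (at_right 0)"
    unfolding eventually_at_right_field by (intro exI[of _ 1]) auto
  ultimately obtain t where "0 < t" "t < 1"
      and "f y + inner v (t *\<^sub>R (z - y)) - e * norm (t *\<^sub>R (z - y)) \<le> f (y + t *\<^sub>R (z - y))"
    using eventually_happens'[OF trivial_limit_at_right_real eventually_conj] by blast
  then show ?thesis
    by (intro exI[of _ t]) simp
qed

lemma frechet_subdiff_imp_weak_subgradient:
  fixes f :: "'a::real_inner \<Rightarrow> real"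
  assumes wc: "weakly_convex \<rho> f" and \<rho>: "\<rho> \<ge> 0" and v: "v \<in> frechet_subdiff f y"
  shows "weak_subgradient \<rho> f y v"
  unfolding weak_subgradient_def
proof
  fix z
  show "f y + inner v (z - y) - \<rho> / 2 * (norm (z - y))\<^sup>2 \<le> f z"
  proof (cases "z = y")
    case False
    let ?n = "norm (z - y)"
    have n: "?n > 0"
      using False by simp
    have approx: "f y + inner v (z - y) - \<rho> / 2 * ?n\<^sup>2 \<le> f z + e * ?n" if e: "e > 0" for e
    proof -
      obtain t where t: "0 < t" "t < 1"
        and fr: "f y + t * inner v (z - y) - e * (t * ?n) \<le> f (y + t *\<^sub>R (z - y))"
        using frechet_subdiff_along_segment[OF v e False] by blast
      have "0 \<le> \<rho> / 2 * (t * t) * ?n\<^sup>2"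
        using \<rho> by simp
      then have "t * (f y + inner v (z - y) - \<rho> / 2 * ?n\<^sup>2) \<le> t * (f z + e * ?n)"
        using fr weakly_convex_segment_le[OF wc, of t y z] t by (simp add: field_simps)
      then show ?thesis
        using t by simp
    qed
    show ?thesis
    proof (rule field_le_epsilon)
      fix e :: real assume "e > 0"
      then show "f y + inner v (z - y) - \<rho> / 2 * ?n\<^sup>2 \<le> f z + e"
        using approx[of "e / ?n"] n by simp
    qed
  qed simp
qed

lemma weak_subgradient_monotone:
  assumes "weak_subgradient \<rho> f x v" and "weak_subgradient \<rho> f y w"
  shows "inner (y - x) (v - w) \<le> \<rho> * (norm (y - x))\<^sup>2"
proof -
  have "f x + inner v (y - x) - \<rho> / 2 * (norm (y - x))\<^sup>2 \<le> f y"
       "f y + inner w (x - y) - \<rho> / 2 * (norm (x - y))\<^sup>2 \<le> f x"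
    using assms unfolding weak_subgradient_def by blast+
  then show ?thesis
    by (simp add: norm_minus_commute inner_diff_left inner_diff_right inner_commute)
qed

lemma weak_subgradient_limit:
  fixes f :: "'a::real_inner \<Rightarrow> real"
  assumes f: "continuous_on UNIV f" and Y: "Y \<longlonglongrightarrow> y" and W: "W \<longlonglongrightarrow> w"
    and sub: "\<And>n. weak_subgradient \<rho> f (Y n) (W n)"
  shows "weak_subgradient \<rho> f y w"
  unfolding weak_subgradient_def
proof
  fix z
  have "(\<lambda>n. f (Y n) + inner (W n) (z - Y n) - \<rho> / 2 * (norm (z - Y n))\<^sup>2)
          \<longlonglongrightarrow> f y + inner w (z - y) - \<rho> / 2 * (norm (z - y))\<^sup>2"
    using continuous_on_tendsto_compose[OF f Y] Y W by (intro tendsto_intros) auto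
  then show "f y + inner w (z - y) - \<rho> / 2 * (norm (z - y))\<^sup>2 \<le> f z"
    using sub unfolding weak_subgradient_def by (intro tendsto_le[OF _ tendsto_const]) auto
qed

lemma regularized_min_segment_ineq:
  fixes f r :: "'a::real_inner \<Rightarrow> real"
  assumes r: "convex_on D r" and xh: "xh \<in> D" and y: "y \<in> D"
    and min: "\<And>w. w \<in> D \<Longrightarrow> f xh + r xh + c / 2 * (norm (xh - x))\<^sup>2 \<le> f w + r w + c / 2 * (norm (w - x))\<^sup>2"
    and t: "0 < t" "t \<le> 1" and W: "weak_subgradient \<rho> f (xh + t *\<^sub>R (y - xh)) W"
  shows "inner (c *\<^sub>R (x - xh) - W) (y - xh) \<le> r y - r xh + t * ((\<rho> + c) / 2 * (norm (y - xh))\<^sup>2)"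
proof -
  define P where "P = xh + t *\<^sub>R (y - xh)"
  define I where "I = inner (xh - x) (y - xh)"
  define J where "J = inner W (y - xh)"
  define M where "M = (norm (y - xh))\<^sup>2"
  define N where "N = (norm (xh - x))\<^sup>2"
  have P_convex: "P = (1 - t) *\<^sub>R xh + t *\<^sub>R y"
    by (simp add: P_def algebra_simps)
  have "P \<in> D"
    using r xh y t unfolding P_convex by (auto simp: convex_on_def convex_alt)
  moreover have "(norm (P - x))\<^sup>2 = N + 2 * t * I + t\<^sup>2 * M"
  proof -
    have "P - x = (xh - x) + t *\<^sub>R (y - xh)"
      by (simp add: P_def algebra_simps)
    then show ?thesis
      unfolding N_def I_def M_def by (simp only: power2_norm_add) (simp add: power_mult_distrib)
  qed
  ultimately have "f xh + r xh + c / 2 * N \<le> f P + r P + c / 2 * (N + 2 * t * I + t\<^sup>2 * M)"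
    using min unfolding N_def by metis
  moreover have "r P \<le> (1 - t) * r xh + t * r y"
    using convex_onD[OF r, of t xh y] t xh y unfolding P_convex by simp
  moreover have "f P - t * J - \<rho> / 2 * (t\<^sup>2 * M) \<le> f xh"
  proof -
    have eq: "xh - P = - (t *\<^sub>R (y - xh))"
      by (simp add: P_def)
    have "f P + inner W (xh - P) - \<rho> / 2 * (norm (xh - P))\<^sup>2 \<le> f xh"
      using W unfolding weak_subgradient_def P_def by blast
    then show ?thesis
      unfolding eq J_def M_def by (simp add: power_mult_distrib)
  qed
  ultimately have "t * (- c * I - J) \<le> t * (r y - r xh + t * ((\<rho> + c) / 2 * M))"
    by (simp add: field_simps power2_eq_square)
  moreover have "inner (c *\<^sub>R (x - xh) - W) (y - xh) = - c * I - J"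
    unfolding I_def J_def by (simp add: inner_diff_left inner_commute algebra_simps)
  ultimately show ?thesis
    using t unfolding M_def by simp
qed

lemma regularized_min_directional_optimality:
  fixes f r :: "'a::euclidean_space \<Rightarrow> real"
  assumes f: "continuous_on UNIV f" and r: "convex_on D r"
    and sub: "\<And>y. y \<in> D \<Longrightarrow> \<exists>u. norm u \<le> L \<and> weak_subgradient \<rho> f y u"
    and xh: "xh \<in> D"
    and min: "\<And>w. w \<in> D \<Longrightarrow> f xh + r xh + c / 2 * (norm (xh - x))\<^sup>2 \<le> f w + r w + c / 2 * (norm (w - x))\<^sup>2"
    and y: "y \<in> D"
  shows "\<exists>w. norm w \<le> L \<and> weak_subgradient \<rho> f xh w \<and> inner (c *\<^sub>R (x - xh) - w) (y - xh) \<le> r y - r xh"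
proof -
  define s where "s n = inverse (real (Suc n))" for n
  define P where "P n = xh + s n *\<^sub>R (y - xh)" for n
  define K where "K = (\<rho> + c) / 2 * (norm (y - xh))\<^sup>2"
  have s: "0 < s n" "s n \<le> 1" for n
    by (auto simp: s_def field_simps)
  have "P n \<in> D" for n
  proof -
    have "P n = (1 - s n) *\<^sub>R xh + s n *\<^sub>R y"
      by (simp add: P_def algebra_simps)
    then show ?thesis
      using r xh y s[of n] by (auto simp: convex_on_def convex_alt)
  qed
  then have "\<forall>n. \<exists>u. norm u \<le> L \<and> weak_subgradient \<rho> f (P n) u"
    using sub by blast
  then obtain W where W: "\<And>n. norm (W n) \<le> L" "\<And>n. weak_subgradient \<rho> f (P n) (W n)"
    by metis
  have approx: "inner (c *\<^sub>R (x - xh) - W n) (y - xh) \<le> r y - r xh + s n * K" for n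
    using regularized_min_segment_ineq[OF r xh y min s[of n]] W(2)[of n] unfolding P_def K_def by blast
  have "bounded (range W)"
    using W(1) by (auto simp: bounded_iff)
  then obtain \<sigma> w where \<sigma>: "strict_mono \<sigma>" and W_lim: "(W \<circ> \<sigma>) \<longlonglongrightarrow> w"
    using bounded_imp_convergent_subsequence by blast
  have s_lim: "(s \<circ> \<sigma>) \<longlonglongrightarrow> 0"
    unfolding s_def using LIMSEQ_subseq_LIMSEQ[OF LIMSEQ_inverse_real_of_nat \<sigma>] .
  have P_lim: "(P \<circ> \<sigma>) \<longlonglongrightarrow> xh"
    using s_lim unfolding P_def comp_def by (intro tendsto_eq_intros) auto
  show ?thesis
  proof (intro exI conjI)
    show "norm w \<le> L"
      using tendsto_norm[OF W_lim] W(1) by (intro tendsto_upperbound) auto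
    show "weak_subgradient \<rho> f xh w"
      using weak_subgradient_limit[OF f P_lim W_lim] W(2) by simp
    have "(\<lambda>n. inner (c *\<^sub>R (x - xh) - W (\<sigma> n)) (y - xh)) \<longlonglongrightarrow> inner (c *\<^sub>R (x - xh) - w) (y - xh)"
      using W_lim unfolding comp_def by (intro tendsto_intros)
    moreover have "(\<lambda>n. r y - r xh + s (\<sigma> n) * K) \<longlonglongrightarrow> r y - r xh"
      using s_lim unfolding comp_def by (intro tendsto_eq_intros) auto
    ultimately show "inner (c *\<^sub>R (x - xh) - w) (y - xh) \<le> r y - r xh"
      using approx by (intro tendsto_le) auto
  qed
qed

section \<open>One step of the proximal stochastic subgradient method\<close>

lemma proximal_points_nonexpansive:
  fixes p q u v :: "'a::real_inner"
  assumes "inner (u - p) (q - p) \<le> a * (r q - r p)" and "inner (v - q) (p - q) \<le> a * (r p - r q)"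
  shows "norm (p - q) \<le> norm (u - v)"
proof (cases "p = q")
  case False
  have "(norm (p - q))\<^sup>2 \<le> inner (u - v) (p - q)"
    using add_mono[OF assms] unfolding power2_norm_eq_inner
    by (simp add: inner_diff_left inner_diff_right inner_commute algebra_simps)
  also have "\<dots> \<le> norm (u - v) * norm (p - q)"
    by (rule norm_cauchy_schwarz)
  finally show ?thesis
    using False by (simp add: power2_eq_square)
qed simp

lemma prox_step_dist_le:
  fixes f r :: "'a::euclidean_space \<Rightarrow> real"
  assumes f: "continuous_on UNIV f" and r: "proper_closed_convex D r"
    and sub: "\<And>y. y \<in> D \<Longrightarrow> \<exists>u. norm u \<le> L \<and> weak_subgradient \<rho> f y u"
    and xh: "xh \<in> D"
    and min: "\<And>w. w \<in> D \<Longrightarrow> f xh + r xh + c / 2 * (norm (xh - x))\<^sup>2 \<le> f w + r w + c / 2 * (norm (w - x))\<^sup>2"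
    and a: "0 < a"
  shows "\<exists>w. norm w \<le> L \<and> weak_subgradient \<rho> f xh w \<and>
           norm (prox D r a (x - a *\<^sub>R g) - xh) \<le> norm ((1 - a * c) *\<^sub>R (x - xh) - a *\<^sub>R (g - w))"
proof -
  define p where "p = prox D r a (x - a *\<^sub>R g)"
  have p: "p \<in> D"
    unfolding p_def using prox_minimizes(1)[OF r a] .
  obtain w where w: "norm w \<le> L" "weak_subgradient \<rho> f xh w"
    and opt: "inner (c *\<^sub>R (x - xh) - w) (p - xh) \<le> r p - r xh"
    using regularized_min_directional_optimality[OF f _ sub xh min p] r
    by (auto simp: proper_closed_convex_def)
  \<comment> \<open>\<open>xh\<close> behaves like the proximal point of \<open>xh + a *\<^sub>R (c *\<^sub>R (x - xh) - w)\<close> in the direction of \<open>p\<close>.\<close>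
  have "norm (p - xh) \<le> norm ((x - a *\<^sub>R g) - (xh + a *\<^sub>R (c *\<^sub>R (x - xh) - w)))"
  proof (rule proximal_points_nonexpansive)
    show "inner ((x - a *\<^sub>R g) - p) (xh - p) \<le> a * (r xh - r p)"
      unfolding p_def by (rule prox_variational_ineq[OF r a xh])
    show "inner ((xh + a *\<^sub>R (c *\<^sub>R (x - xh) - w)) - xh) (p - xh) \<le> a * (r p - r xh)"
      using mult_left_mono[OF opt less_imp_le[OF a]] by simp
  qed
  also have "(x - a *\<^sub>R g) - (xh + a *\<^sub>R (c *\<^sub>R (x - xh) - w)) = (1 - a * c) *\<^sub>R (x - xh) - a *\<^sub>R (g - w)"
    by (simp add: algebra_simps)
  finally show ?thesis
    using w unfolding p_def by blast
qed

lemma prox_step_sq_dist_le: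
  fixes f r :: "'a::euclidean_space \<Rightarrow> real"
  assumes f: "continuous_on UNIV f" and r: "proper_closed_convex D r"
    and sub: "\<And>y. y \<in> D \<Longrightarrow> \<exists>u. norm u \<le> L \<and> weak_subgradient \<rho> f y u"
    and xh: "xh \<in> D"
    and min: "\<And>w. w \<in> D \<Longrightarrow> f xh + r xh + c / 2 * (norm (xh - x))\<^sup>2 \<le> f w + r w + c / 2 * (norm (w - x))\<^sup>2"
    and v: "weak_subgradient \<rho> f x v"
    and c: "\<rho> \<le> c" "c \<le> 2 * \<rho>" and a: "0 < a" "a * c \<le> 1"
  shows "(norm (prox D r a (x - a *\<^sub>R g) - xh))\<^sup>2
           \<le> (1 - 2 * a * (c - \<rho>)) * (norm (xh - x))\<^sup>2 + 2 * a * (1 - a * c) * inner (xh - x) (g - v)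
             + 2 * a\<^sup>2 * (L\<^sup>2 + (norm g)\<^sup>2)"
proof -
  define p where "p = prox D r a (x - a *\<^sub>R g)"
  define b where "b = 1 - a * c"
  obtain w where w: "norm w \<le> L" "weak_subgradient \<rho> f xh w"
    and dist: "norm (p - xh) \<le> norm (b *\<^sub>R (x - xh) - a *\<^sub>R (g - w))"
    using prox_step_dist_le[OF f r sub xh min a(1)] unfolding p_def b_def by blast
  from dist have "(norm (p - xh))\<^sup>2 \<le> (norm (b *\<^sub>R (x - xh) - a *\<^sub>R (g - w)))\<^sup>2"
    by (simp add: power_mono)
  also have "\<dots> = b\<^sup>2 * (norm (xh - x))\<^sup>2 + 2 * a * b * inner (xh - x) (g - w) + a\<^sup>2 * (norm (g - w))\<^sup>2"
  proof -
    have "inner (b *\<^sub>R (x - xh)) (a *\<^sub>R (g - w)) = - (a * b * inner (xh - x) (g - w))"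
      by (simp add: inner_diff_left algebra_simps)
    then show ?thesis
      unfolding power2_norm_diff[of "b *\<^sub>R (x - xh)"]
      by (simp add: power_mult_distrib norm_minus_commute)
  qed
  also have "\<dots> \<le> b\<^sup>2 * (norm (xh - x))\<^sup>2 + 2 * a * b * (inner (xh - x) (g - v) + \<rho> * (norm (xh - x))\<^sup>2)
                   + a\<^sup>2 * (2 * L\<^sup>2 + 2 * (norm g)\<^sup>2)"
  proof -
    have "inner (xh - x) (g - w) = inner (xh - x) (g - v) + inner (xh - x) (v - w)"
      by (simp add: inner_diff_right)
    also have "\<dots> \<le> inner (xh - x) (g - v) + \<rho> * (norm (xh - x))\<^sup>2"
      using weak_subgradient_monotone[OF v w(2)] by simp
    finally have "2 * a * b * inner (xh - x) (g - w) \<le> 2 * a * b * (inner (xh - x) (g - v) + \<rho> * (norm (xh - x))\<^sup>2)"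
      using a by (intro mult_left_mono) (auto simp: b_def)
    moreover have "a\<^sup>2 * (norm (g - w))\<^sup>2 \<le> a\<^sup>2 * (2 * L\<^sup>2 + 2 * (norm g)\<^sup>2)"
    proof (rule mult_left_mono)
      have "(norm (g - w))\<^sup>2 \<le> (norm g + norm w)\<^sup>2"
        using norm_triangle_ineq4[of g w] by (simp add: power_mono)
      also have "\<dots> \<le> 2 * (norm g)\<^sup>2 + 2 * (norm w)\<^sup>2"
        by (simp add: power2_sum) (use sum_squares_bound[of "norm g" "norm w"] in simp)
      also have "\<dots> \<le> 2 * L\<^sup>2 + 2 * (norm g)\<^sup>2"
        using w(1) by (simp add: power_mono)
      finally show "(norm (g - w))\<^sup>2 \<le> 2 * L\<^sup>2 + 2 * (norm g)\<^sup>2" .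
    qed simp
    ultimately show ?thesis
      by linarith
  qed
  also have "\<dots> \<le> (1 - 2 * a * (c - \<rho>)) * (norm (xh - x))\<^sup>2 + 2 * a * b * inner (xh - x) (g - v)
                   + 2 * a\<^sup>2 * (L\<^sup>2 + (norm g)\<^sup>2)"
  proof -
    \<comment> \<open>\<open>b\<^sup>2 + 2 a \<rho> b = 1 - 2 a (c - \<rho>) + a\<^sup>2 c (c - 2 \<rho>)\<close>\<close>
    have "b\<^sup>2 + 2 * a * b * \<rho> \<le> 1 - 2 * a * (c - \<rho>)"
    proof -
      have "a\<^sup>2 * c * (c - 2 * \<rho>) \<le> 0"
        using c by (intro mult_nonneg_nonpos) simp_all
      then show ?thesis
        by (simp add: b_def algebra_simps power2_eq_square)
    qed
    then have "(b\<^sup>2 + 2 * a * b * \<rho>) * (norm (xh - x))\<^sup>2 \<le> (1 - 2 * a * (c - \<rho>)) * (norm (xh - x))\<^sup>2"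
      by (rule mult_right_mono) simp
    then show ?thesis
      by (simp add: algebra_simps)
  qed
  finally show ?thesis
    unfolding p_def b_def .
qed

context prob_space
begin

lemma second_moment_bounds:
  fixes g :: "'a \<Rightarrow> 'b::euclidean_space"
  assumes g: "integrable M g" and sq: "(\<integral>\<^sup>+\<omega>. ennreal ((norm (g \<omega>))\<^sup>2) \<partial>M) \<le> ennreal (L\<^sup>2)"
    and L: "L \<ge> 0"
  shows "integrable M (\<lambda>\<omega>. (norm (g \<omega>))\<^sup>2)" and "expectation (\<lambda>\<omega>. (norm (g \<omega>))\<^sup>2) \<le> L\<^sup>2"
    and "norm (expectation g) \<le> L"
proof -
  have "(\<lambda>\<omega>. (norm (g \<omega>))\<^sup>2) \<in> borel_measurable M"
    using borel_measurable_integrable[OF g] by measurable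
  moreover have "(\<integral>\<^sup>+\<omega>. ennreal (norm ((norm (g \<omega>))\<^sup>2)) \<partial>M) < \<infinity>"
    using sq by (simp add: order_le_less_trans)
  ultimately show sq_int: "integrable M (\<lambda>\<omega>. (norm (g \<omega>))\<^sup>2)"
    by (rule integrableI_bounded)
  have "ennreal (expectation (\<lambda>\<omega>. (norm (g \<omega>))\<^sup>2)) = (\<integral>\<^sup>+\<omega>. ennreal ((norm (g \<omega>))\<^sup>2) \<partial>M)"
    using sq_int by (intro nn_integral_eq_integral[symmetric]) auto
  also note sq
  finally show sq_le: "expectation (\<lambda>\<omega>. (norm (g \<omega>))\<^sup>2) \<le> L\<^sup>2"
    by (simp add: ennreal_le_iff)
  define m where "m = expectation g"
  have "(norm m)\<^sup>2 = expectation (\<lambda>\<omega>. inner m (g \<omega>))"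
    unfolding m_def power2_norm_eq_inner using g by simp
  also have "\<dots> \<le> expectation (\<lambda>\<omega>. (norm m)\<^sup>2 / 2 + (norm (g \<omega>))\<^sup>2 / 2)"
  proof (rule integral_mono)
    fix \<omega>
    have "inner m (g \<omega>) \<le> norm m * norm (g \<omega>)"
      by (rule norm_cauchy_schwarz)
    also have "\<dots> \<le> (norm m)\<^sup>2 / 2 + (norm (g \<omega>))\<^sup>2 / 2"
      using sum_squares_bound[of "norm m" "norm (g \<omega>)"] by (simp add: power2_eq_square field_simps)
    finally show "inner m (g \<omega>) \<le> (norm m)\<^sup>2 / 2 + (norm (g \<omega>))\<^sup>2 / 2" .
  qed (use g sq_int in auto)
  also have "\<dots> = (norm m)\<^sup>2 / 2 + expectation (\<lambda>\<omega>. (norm (g \<omega>))\<^sup>2) / 2"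
    using sq_int by (simp add: prob_space)
  finally have "(norm m)\<^sup>2 \<le> L\<^sup>2"
    using sq_le by simp
  then show "norm (expectation g) \<le> L"
    unfolding m_def using L by (rule power2_le_imp_le)
qed

lemma nn_integral_le_of_pointwise_bound:
  fixes g :: "'a \<Rightarrow> 'b::euclidean_space"
  assumes g: "integrable M g" and sq: "(\<integral>\<^sup>+\<omega>. ennreal ((norm (g \<omega>))\<^sup>2) \<partial>M) \<le> ennreal (L\<^sup>2)"
    and L: "L \<ge> 0" and B: "B \<ge> 0"
    and X: "\<And>\<omega>. 0 \<le> X \<omega>"
    and bound: "\<And>\<omega>. X \<omega> \<le> A + C * inner d (g \<omega> - expectation g) + B * (L\<^sup>2 + (norm (g \<omega>))\<^sup>2)"
  shows "(\<integral>\<^sup>+\<omega>. ennreal (X \<omega>) \<partial>M) \<le> ennreal (A + 2 * B * L\<^sup>2)"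
proof -
  define Y where "Y \<omega> = A + C * inner d (g \<omega> - expectation g) + B * (L\<^sup>2 + (norm (g \<omega>))\<^sup>2)" for \<omega>
  note sq_int = second_moment_bounds(1)[OF g sq L]
  have "integrable M (\<lambda>\<omega>. inner d (g \<omega> - expectation g))"
    using g by (simp add: inner_diff_right)
  moreover have "expectation (\<lambda>\<omega>. inner d (g \<omega> - expectation g)) = 0"
    using g by (simp add: inner_diff_right prob_space)
  ultimately have Y_int: "integrable M Y" and "expectation Y = A + B * (L\<^sup>2 + expectation (\<lambda>\<omega>. (norm (g \<omega>))\<^sup>2))"
    using sq_int unfolding Y_def by (simp_all add: prob_space)
  then have EY: "expectation Y \<le> A + 2 * B * L\<^sup>2"
    using second_moment_bounds(2)[OF g sq L] B by (simp add: mult_left_mono algebra_simps)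
  have "(\<integral>\<^sup>+\<omega>. ennreal (X \<omega>) \<partial>M) \<le> (\<integral>\<^sup>+\<omega>. ennreal (Y \<omega>) \<partial>M)"
    using bound unfolding Y_def by (intro nn_integral_mono ennreal_leI)
  also have "\<dots> = ennreal (expectation Y)"
    using Y_int X bound unfolding Y_def by (intro nn_integral_eq_integral) (auto intro: order_trans)
  also have "\<dots> \<le> ennreal (A + 2 * B * L\<^sup>2)"
    using EY by (rule ennreal_leI)
  finally show ?thesis .
qed

end

theorem lemma3p3:
  fixes \<rho> \<rho>' L :: real
    and f r :: "'a::euclidean_space \<Rightarrow> real" and D U :: "'a set"
    and M :: "'b measure" and G :: "'a \<Rightarrow> 'b \<Rightarrow> 'a"
    and \<alpha> :: "nat \<Rightarrow> real" and x0 :: 'a and \<xi> :: "nat \<Rightarrow> 'b" and t :: nat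
  assumes rho_pos: "\<rho> > 0"
    and f_wc: "weakly_convex \<rho> f"
    and r_pcc: "proper_closed_convex D r"
    and A1: "prob_space M"
    and xi_in: "\<And>i. \<xi> i \<in> space M"
    and U_open: "open U" and D_sub_U: "D \<subseteq> U"
    and G_meas: "(\<lambda>(x, \<omega>). G x \<omega>) \<in> borel_measurable (restrict_space (borel \<Otimes>\<^sub>M M) (U \<times> space M))"
    and A2_int: "\<And>x. x \<in> U \<Longrightarrow> integrable M (G x)"
    and A2: "\<And>x. x \<in> U \<Longrightarrow> (\<integral>\<omega>. G x \<omega> \<partial>M) \<in> frechet_subdiff f x"
    and L_nonneg: "L \<ge> 0"
    and A3: "\<And>x. x \<in> D \<Longrightarrow> (\<integral>\<^sup>+\<omega>. ennreal ((norm (G x \<omega>))\<^sup>2) \<partial>M) \<le> ennreal (L\<^sup>2)"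
    and x0_in: "x0 \<in> D"
    and rho'_gt: "\<rho> < \<rho>'" and rho'_le: "\<rho>' \<le> 2 * \<rho>"
    and alpha_pos: "\<And>s. 0 < \<alpha> s" and alpha_le: "\<And>s. \<alpha> s \<le> 1 / \<rho>'"
  shows "(\<integral>\<^sup>+\<omega>. ennreal ((norm (prox D r (\<alpha> t)
              (sgd_iter D r G \<alpha> x0 \<xi> t - \<alpha> t *\<^sub>R G (sgd_iter D r G \<alpha> x0 \<xi> t) \<omega>)
            - moreau_argmin f D r \<rho>' (sgd_iter D r G \<alpha> x0 \<xi> t)))\<^sup>2) \<partial>M)
     \<le> ennreal ((norm (sgd_iter D r G \<alpha> x0 \<xi> t - moreau_argmin f D r \<rho>' (sgd_iter D r G \<alpha> x0 \<xi> t)))\<^sup>2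
          + 4 * (\<alpha> t)\<^sup>2 * L\<^sup>2
          - 2 * \<alpha> t * (\<rho>' - \<rho>) * (norm (sgd_iter D r G \<alpha> x0 \<xi> t - moreau_argmin f D r \<rho>' (sgd_iter D r G \<alpha> x0 \<xi> t)))\<^sup>2)"
proof -
  interpret prob_space M by (rule A1)
  define a where "a = \<alpha> t"
  define x where "x = sgd_iter D r G \<alpha> x0 \<xi> t"
  define xh where "xh = moreau_argmin f D r \<rho>' x"
  define g where "g = G x"
  have x: "x \<in> D"
    unfolding x_def using r_pcc alpha_pos x0_in by (rule sgd_iter_in_domain)
  have mean: "norm (expectation (G y)) \<le> L \<and> weak_subgradient \<rho> f y (expectation (G y))"
    if y: "y \<in> D" for y
    using y D_sub_U second_moment_bounds(3)[OF A2_int A3[OF y] L_nonneg]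
      frechet_subdiff_imp_weak_subgradient[OF f_wc _ A2] rho_pos by auto
  then have sub: "\<And>y. y \<in> D \<Longrightarrow> \<exists>u. norm u \<le> L \<and> weak_subgradient \<rho> f y u"
    by blast
  have g: "integrable M g" "weak_subgradient \<rho> f x (expectation g)"
    unfolding g_def using x D_sub_U A2_int mean by auto
  have a: "0 < a" "a * \<rho>' \<le> 1"
    using alpha_pos[of t] alpha_le[of t] rho_pos rho'_gt by (auto simp: a_def field_simps)
  have step: "(norm (prox D r a (x - a *\<^sub>R g \<omega>) - xh))\<^sup>2
      \<le> (1 - 2 * a * (\<rho>' - \<rho>)) * (norm (xh - x))\<^sup>2 + 2 * a * (1 - a * \<rho>') * inner (xh - x) (g \<omega> - expectation g)
        + 2 * a\<^sup>2 * (L\<^sup>2 + (norm (g \<omega>))\<^sup>2)" for \<omega>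
    unfolding xh_def
    using moreau_argmin_minimizes[OF f_wc r_pcc rho'_gt] rho'_gt rho'_le a
    by (intro prox_step_sq_dist_le[OF weakly_convex_continuous[OF f_wc] r_pcc sub _ _ g(2)]) auto
  have "(\<integral>\<^sup>+\<omega>. ennreal ((norm (prox D r a (x - a *\<^sub>R g \<omega>) - xh))\<^sup>2) \<partial>M)
      \<le> ennreal ((1 - 2 * a * (\<rho>' - \<rho>)) * (norm (xh - x))\<^sup>2 + 2 * (2 * a\<^sup>2) * L\<^sup>2)"
    by (rule nn_integral_le_of_pointwise_bound[OF g(1) A3[OF x, folded g_def] L_nonneg _ _ step]) simp_all
  also have "(1 - 2 * a * (\<rho>' - \<rho>)) * (norm (xh - x))\<^sup>2 + 2 * (2 * a\<^sup>2) * L\<^sup>2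
      = (norm (x - xh))\<^sup>2 + 4 * a\<^sup>2 * L\<^sup>2 - 2 * a * (\<rho>' - \<rho>) * (norm (x - xh))\<^sup>2"
    by (simp add: norm_minus_commute algebra_simps)
  finally show ?thesis
    unfolding a_def x_def xh_def g_def .
qed

end
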